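(* Let $\delta>0$ and let $x:[0,1]\to\mathbb{D}_{1+\delta}\setminus\dot{\mathbb{D}}$ be a $C^1$ closed curve ($x(0)=x(1)$). Then for any capping disc $u:D\to\mathbb{R}^2$ of $x$, \[ \Big|\int_D u^*\omega-\pi\deg(x)\Big|\le L(x)\,\delta, \] where $\deg(x)\in\mathbb{Z}$ is the winding number of $x$ around the origin and $L(x)$ is the Euclidean length of $x$.
   Context: $\omega=dx\wedge dy$ on $\mathbb{R}^2$; $\mathbb{D}$ is the closed unit disc, $\dot{\mathbb{D}}$ its interior, and $\mathbb{D}_{1+\delta}$ the closed disc of radius $1+\delta$ centered at $0$. A capping disc of $x$ is a map $u$ from the closed unit disc $D$ with $u|_{\partial D}$ parametrizing $x$. *)

theory Defs
  imports "HOL-Complex_Analysis.Complex_Analysis"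
begin

text \<open>We identify R^2 with \<complex>. For a map u with (real) derivative U z at z,
  the pullback of omega = dx wedge dy is det(DU) dx wedge dy, and
  det(U z) = Im (cnj (U z 1) * U z \<i>).\<close>

definition jac_det :: "(complex \<Rightarrow> complex) \<Rightarrow> real" where
  "jac_det L = Im (cnj (L 1) * L \<i>)"

definition pullback_omega_integral :: "(complex \<Rightarrow> complex \<Rightarrow> complex) \<Rightarrow> real" where
  "pullback_omega_integral U = integral (cball 0 1) (\<lambda>z. jac_det (U z))"

end

theory Submission
  imports Defs
begin

(* By polar coordinates, the integral of u^*omega over the disc is the integral over r in [0, 1]
   of the rate of change of A(r), the signed area (1/2) int Im (conj v dv) enclosed by the loop
   v(t) = u(r e^(2 pi i t)). As A(0) = 0, it equals A(1) = (1/2) int Im (conj x dx).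
   On the other hand pi deg x = (1/2) int Im (conj x dx) / |x|^2, so the difference is
   (1/2) int Im (conj x dx) (1 - 1/|x|^2), whose integrand is at most |x'| delta
   when 1 <= |x| <= 1 + delta. *)

no_notation fps_nth (infixl \<open>$\<close> 75)
hide_const (open) Polynomial.content

section \<open>Polar coordinates on the unit disc\<close>

lemma has_integral_twiddle_subset:
  fixes g :: "'n::euclidean_space \<Rightarrow> 'm::euclidean_space" and h :: "'m \<Rightarrow> 'n"
    and f :: "'m \<Rightarrow> 'c::banach"
  assumes hg: "\<And>x. h (g x) = x" and gh: "\<And>x. g (h x) = x"
    and contg: "\<And>x. continuous (at x) g"
    and g_cbox: "\<And>u v. g ` cbox u v = cbox (g u) (g v)"
    and h_cbox: "\<And>u v. h ` cbox u v = cbox (h u) (h v)"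
    and content: "\<And>u v. content (g ` cbox u v) = content (cbox u v)"
    and S: "S \<subseteq> cbox a b"
    and f: "(f has_integral i) S"
  shows "((\<lambda>x. f (g x)) has_integral i) (h ` S)"
proof -
  let ?F = "\<lambda>x. if x \<in> S then f x else 0"
  have gb: "\<exists>w z. g ` cbox u v = cbox w z" for u v using g_cbox by blast
  have hb: "\<exists>w z. h ` cbox u v = cbox w z" for u v using h_cbox by blast
  have "(?F has_integral i) (cbox a b)" using S f by simp
  from has_integral_twiddle[where r=1, OF _ hg gh contg gb hb _ this] content
  have "((\<lambda>x. ?F (g x)) has_integral i) (h ` cbox a b)" by simp
  moreover have "(\<lambda>x. ?F (g x)) = (\<lambda>x. if x \<in> h ` S then f (g x) else 0)"
    by (rule ext) (metis gh hg image_iff)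
  moreover have "h ` S \<subseteq> h ` cbox a b" using S by auto
  ultimately show ?thesis by simp
qed

lemma integrable_continuous_compact:
  fixes f :: "'a::euclidean_space \<Rightarrow> real"
  assumes "compact S" "continuous_on S f"
  shows "f integrable_on S"
proof -
  have "(\<lambda>x. indicator S x *\<^sub>R f x) integrable_on UNIV"
    by (rule integrable_on_lborel[OF borel_integrable_compact[OF assms]])
  moreover have "(\<lambda>x. indicator S x *\<^sub>R f x) = (\<lambda>x. if x \<in> S then f x else 0)"
    by (auto simp: indicator_def)
  ultimately show ?thesis by (simp add: integrable_restrict_UNIV)
qed

lemma absolutely_integrable_continuous_compact:
  fixes f :: "'a::euclidean_space \<Rightarrow> real"
  assumes "compact S" "continuous_on S f"
  shows "f absolutely_integrable_on S"
  unfolding absolutely_integrable_on_def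
  using assms by (simp add: integrable_continuous_compact continuous_on_rabs)

definition complex_of_vec :: "real^2 \<Rightarrow> complex" where
  "complex_of_vec v = Complex (v$1) (v$2)"

definition vec_of_complex :: "complex \<Rightarrow> real^2" where
  "vec_of_complex z = vector [Re z, Im z]"

definition vec_of_pair :: "real \<times> real \<Rightarrow> real^2" where
  "vec_of_pair p = vector [fst p, snd p]"

definition pair_of_vec :: "real^2 \<Rightarrow> real \<times> real" where
  "pair_of_vec v = (v$1, v$2)"

lemma vec_of_complex_inverse [simp]: "complex_of_vec (vec_of_complex z) = z"
  by (simp add: complex_of_vec_def vec_of_complex_def)

lemma complex_of_vec_inverse [simp]: "vec_of_complex (complex_of_vec v) = v"
  by (simp add: complex_of_vec_def vec_of_complex_def vec_eq_iff forall_2)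

lemma pair_of_vec_inverse [simp]: "vec_of_pair (pair_of_vec v) = v"
  by (simp add: vec_of_pair_def pair_of_vec_def vec_eq_iff forall_2)

lemma vec_of_pair_inverse [simp]: "pair_of_vec (vec_of_pair p) = p"
  by (simp add: vec_of_pair_def pair_of_vec_def)

lemma bounded_linear_complex_of_vec: "bounded_linear complex_of_vec"
  unfolding linear_conv_bounded_linear[symmetric]
  by (rule linearI) (simp_all add: complex_of_vec_def complex_eq_iff)

lemma bounded_linear_vec_of_complex: "bounded_linear vec_of_complex"
  unfolding linear_conv_bounded_linear[symmetric]
  by (rule linearI) (simp_all add: vec_of_complex_def vec_eq_iff forall_2)

lemma bounded_linear_vec_of_pair: "bounded_linear vec_of_pair"
  unfolding linear_conv_bounded_linear[symmetric]
  by (rule linearI) (simp_all add: vec_of_pair_def vec_eq_iff forall_2)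

lemma bounded_linear_pair_of_vec: "bounded_linear pair_of_vec"
  unfolding linear_conv_bounded_linear[symmetric]
  by (rule linearI) (simp_all add: pair_of_vec_def)

lemma complex_of_vec_cbox: "complex_of_vec ` cbox u v = cbox (complex_of_vec u) (complex_of_vec v)"
proof
  show "complex_of_vec ` cbox u v \<subseteq> cbox (complex_of_vec u) (complex_of_vec v)"
    by (auto simp: cbox_complex_eq complex_of_vec_def mem_box_cart)
  show "cbox (complex_of_vec u) (complex_of_vec v) \<subseteq> complex_of_vec ` cbox u v"
  proof
    fix z assume "z \<in> cbox (complex_of_vec u) (complex_of_vec v)"
    then have "vec_of_complex z \<in> cbox u v"
      by (auto simp: cbox_complex_eq complex_of_vec_def vec_of_complex_def mem_box_cart forall_2)
    then show "z \<in> complex_of_vec ` cbox u v" by (metis vec_of_complex_inverse image_eqI)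
  qed
qed

lemma vec_of_complex_cbox: "vec_of_complex ` cbox u v = cbox (vec_of_complex u) (vec_of_complex v)"
proof -
  have "vec_of_complex ` cbox u v =
      vec_of_complex ` complex_of_vec ` cbox (vec_of_complex u) (vec_of_complex v)"
    by (simp only: complex_of_vec_cbox vec_of_complex_inverse)
  then show ?thesis by (simp add: image_image)
qed

lemma content_complex_of_vec_cbox: "content (complex_of_vec ` cbox u v) = content (cbox u v)"
proof (cases "cbox u v = {}")
  case False
  then have "cbox (complex_of_vec u) (complex_of_vec v) \<noteq> {}"
    by (metis complex_of_vec_cbox image_is_empty)
  then have "content (cbox (complex_of_vec u) (complex_of_vec v)) =
      (v$1 - u$1) * (v$2 - u$2)"
    by (simp add: content_cbox' Basis_complex_def complex_of_vec_def)
  with False show ?thesis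
    by (simp add: complex_of_vec_cbox content_cbox_cart UNIV_2)
qed simp

lemma vec_of_pair_cbox: "vec_of_pair ` cbox u v = cbox (vec_of_pair u) (vec_of_pair v)"
proof
  show "vec_of_pair ` cbox u v \<subseteq> cbox (vec_of_pair u) (vec_of_pair v)"
    by (cases u; cases v) (auto simp: vec_of_pair_def mem_box_cart forall_2 cbox_Pair_eq)
  show "cbox (vec_of_pair u) (vec_of_pair v) \<subseteq> vec_of_pair ` cbox u v"
  proof
    fix z assume "z \<in> cbox (vec_of_pair u) (vec_of_pair v)"
    then have "pair_of_vec z \<in> cbox u v"
      by (cases u; cases v) (auto simp: vec_of_pair_def pair_of_vec_def mem_box_cart forall_2 cbox_Pair_eq)
    then show "z \<in> vec_of_pair ` cbox u v" by (metis pair_of_vec_inverse image_eqI)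
  qed
qed

lemma pair_of_vec_cbox: "pair_of_vec ` cbox u v = cbox (pair_of_vec u) (pair_of_vec v)"
proof -
  have "pair_of_vec ` cbox u v =
      pair_of_vec ` vec_of_pair ` cbox (pair_of_vec u) (pair_of_vec v)"
    by (simp only: vec_of_pair_cbox pair_of_vec_inverse)
  then show ?thesis by (simp add: image_image)
qed

lemma content_vec_of_pair_cbox: "content (vec_of_pair ` cbox u v) = content (cbox u v)"
proof (cases "cbox u v = {}")
  case False
  then have "cbox (vec_of_pair u) (vec_of_pair v) \<noteq> {}"
    by (metis vec_of_pair_cbox image_is_empty)
  moreover obtain a b c d where "u = (a, b)" "v = (c, d)" by fastforce
  ultimately show ?thesis using False
    unfolding vec_of_pair_cbox
    by (simp add: content_cbox_cart UNIV_2 vec_of_pair_def content_Pair cbox_Pair_eq_0 content_real)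
qed simp

definition polar :: "real^2 \<Rightarrow> real^2" where
  "polar v = vec_of_complex (v$1 * cis (2 * pi * v$2))"

definition polar_deriv :: "real^2 \<Rightarrow> real^2 \<Rightarrow> real^2" where
  "polar_deriv v w = vec_of_complex
     (w$1 * cis (2 * pi * v$2) + v$1 * ((2 * pi * w$2) *\<^sub>R (\<i> * cis (2 * pi * v$2))))"

definition polar_domain :: "(real^2) set" where
  "polar_domain = {v. 0 < v$1 \<and> v$1 \<le> 1 \<and> 0 \<le> v$2 \<and> v$2 < 1}"

definition unit_square :: "(real^2) set" where
  "unit_square = cbox 0 (vector [1, 1])"

lemma complex_of_vec_polar: "complex_of_vec (polar v) = v$1 * cis (2 * pi * v$2)"
  by (simp add: polar_def)

lemma has_derivative_polar: "(polar has_derivative polar_deriv v) (at v within S)"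
proof -
  have "((\<lambda>v. complex_of_real (v$1) * cis (2 * pi * v$2)) has_derivative
          (\<lambda>w. v$1 * ((2 * pi * w$2) *\<^sub>R (\<i> * cis (2 * pi * v$2))) + w$1 * cis (2 * pi * v$2)))
        (at v within S)"
    by (auto intro!: derivative_eq_intros bounded_linear_imp_has_derivative)
  from bounded_linear.has_derivative[OF bounded_linear_vec_of_complex this] show ?thesis
    unfolding polar_def polar_deriv_def by (simp add: add.commute)
qed

lemma det_polar_deriv: "det (matrix (polar_deriv v)) = 2 * pi * v$1"
proof -
  let ?t = "pi * (2 * v$2)"
  have "det (matrix (polar_deriv v)) =
      pi * (v$1 * (2 * (cos ?t * cos ?t))) + pi * (v$1 * (2 * (sin ?t * sin ?t)))"
    by (simp add: det_2 matrix_def polar_deriv_def vec_of_complex_def axis_def algebra_simps)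
  also have "\<dots> = pi * (v$1 * 2) * (cos ?t * cos ?t + sin ?t * sin ?t)"
    by (simp only: ring_distribs mult_ac)
  finally show ?thesis by simp
qed

lemma inj_on_polar: "inj_on polar polar_domain"
proof (rule inj_onI)
  fix v w assume v: "v \<in> polar_domain" and w: "w \<in> polar_domain" and "polar v = polar w"
  then have eq: "v$1 * cis (2 * pi * v$2) = w$1 * cis (2 * pi * w$2)"
    by (metis complex_of_vec_polar)
  moreover have "norm (v$1 * cis (2 * pi * v$2)) = v$1" "norm (w$1 * cis (2 * pi * w$2)) = w$1"
    using v w by (simp_all add: polar_domain_def norm_mult)
  ultimately have "v$1 = w$1" by metis
  moreover have "v$2 = w$2"
  proof -
    have "Arg2pi (v$1 * cis (2 * pi * v$2)) = 2 * pi * v$2"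
      by (rule Arg2pi_unique) (use v in \<open>auto simp: polar_domain_def cis_conv_exp\<close>)
    moreover have "Arg2pi (w$1 * cis (2 * pi * w$2)) = 2 * pi * w$2"
      by (rule Arg2pi_unique) (use w in \<open>auto simp: polar_domain_def cis_conv_exp\<close>)
    ultimately have "2 * pi * v$2 = 2 * pi * w$2" using eq by metis
    then show ?thesis by simp
  qed
  ultimately show "v = w" by (simp add: vec_eq_iff forall_2)
qed

lemma polar_image: "polar ` polar_domain = vec_of_complex ` (cball 0 1 - {0})"
proof
  show "polar ` polar_domain \<subseteq> vec_of_complex ` (cball 0 1 - {0})"
  proof
    fix y assume "y \<in> polar ` polar_domain"
    then obtain v where v: "v \<in> polar_domain" and y: "y = polar v" by auto
    have "complex_of_vec y \<in> cball 0 1 - {0}"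
      using v by (auto simp: y complex_of_vec_polar polar_domain_def norm_mult)
    then show "y \<in> vec_of_complex ` (cball 0 1 - {0})" by (metis complex_of_vec_inverse image_eqI)
  qed
  show "vec_of_complex ` (cball 0 1 - {0}) \<subseteq> polar ` polar_domain"
  proof
    fix y assume "y \<in> vec_of_complex ` (cball 0 1 - {0})"
    then obtain z where z: "z \<in> cball 0 1" "z \<noteq> 0" and y: "y = vec_of_complex z" by blast
    define v where "v = (vector [norm z, Arg2pi z / (2 * pi)] :: real^2)"
    have "v \<in> polar_domain" using z Arg2pi[of z] by (auto simp: v_def polar_domain_def)
    moreover have "complex_of_vec (polar v) = z"
      using Arg2pi_eq[of z] by (simp add: complex_of_vec_polar v_def cis_conv_exp)
    then have "polar v = y" by (metis complex_of_vec_inverse y)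
    ultimately show "y \<in> polar ` polar_domain" by blast
  qed
qed

lemma negligible_coordinate_hyperplane: "negligible {x::real^'n. x$k = c}"
proof -
  have "axis k (1::real) \<in> Basis" by (auto simp: Basis_vec_def)
  from negligible_standard_hyperplane[OF this, of c] show ?thesis
    by (simp add: cart_eq_inner_axis)
qed

lemma polar_domain_eq: "polar_domain = unit_square - ({v. v$1 = 0} \<union> {v. v$2 = 1})"
  by (auto simp: polar_domain_def unit_square_def mem_box_cart forall_2)

lemma polar_domain_lebesgue: "polar_domain \<in> sets lebesgue"
proof -
  have "unit_square \<in> sets lebesgue"
    unfolding unit_square_def by (rule fmeasurableD[OF lmeasurable_cbox])
  moreover have "{v::real^2. v$1 = 0} \<union> {v. v$2 = 1} \<in> sets lebesgue"
    by (intro negligible_imp_sets negligible_Un negligible_coordinate_hyperplane)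
  ultimately show ?thesis unfolding polar_domain_eq by blast
qed

lemma integral_polar_vec:
  fixes H :: "real^2 \<Rightarrow> real"
  assumes cont: "continuous_on (vec_of_complex ` cball 0 1) H"
  shows "integral (vec_of_complex ` cball 0 1) H =
    integral unit_square (\<lambda>v. 2 * pi * v$1 * H (polar v))"
proof -
  let ?F = "\<lambda>v. vec (H v) :: real^1"
  have disc_minus_origin:
      "vec_of_complex ` (cball 0 1 - {0}) = vec_of_complex ` cball 0 1 - {vec_of_complex 0}"
    by (auto, metis vec_of_complex_inverse)
  have "compact (vec_of_complex ` cball 0 1)"
    by (intro compact_continuous_image linear_continuous_on bounded_linear_vec_of_complex compact_cball)
  then have int_disc: "H absolutely_integrable_on (vec_of_complex ` cball 0 1)"
    by (rule absolutely_integrable_continuous_compact[OF _ cont])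
  have "H absolutely_integrable_on polar ` polar_domain"
    unfolding polar_image disc_minus_origin
    by (rule iffD1[OF absolutely_integrable_spike_set_eq int_disc])
      (auto intro: negligible_subset[of "{vec_of_complex 0}"])
  then have "?F absolutely_integrable_on polar ` polar_domain"
    by (simp add: absolutely_integrable_on_1_iff)
  then have "integral polar_domain (\<lambda>v. \<bar>det (matrix (polar_deriv v))\<bar> *\<^sub>R ?F (polar v)) =
      integral (polar ` polar_domain) ?F"
    using has_absolute_integral_change_of_variables[OF polar_domain_lebesgue has_derivative_polar
        inj_on_polar, of ?F "integral (polar ` polar_domain) ?F"]
    by blast
  then have "integral polar_domain (\<lambda>v. \<bar>2 * pi * v$1\<bar> * H (polar v)) =
      integral (polar ` polar_domain) H"
    by (simp add: det_polar_deriv integral_on_1_eq vec_eq_iff)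
  also have "integral (polar ` polar_domain) H = integral (vec_of_complex ` cball 0 1) H"
    unfolding polar_image disc_minus_origin
    by (rule integral_spike_set) (auto intro: negligible_subset[of "{vec_of_complex 0}"])
  also have "integral polar_domain (\<lambda>v. \<bar>2 * pi * v$1\<bar> * H (polar v)) =
      integral unit_square (\<lambda>v. \<bar>2 * pi * v$1\<bar> * H (polar v))"
    by (rule integral_spike_set; rule negligible_subset[of "{v::real^2. v$1 = 0} \<union> {v. v$2 = 1}"])
      (auto simp: polar_domain_eq intro: negligible_Un negligible_coordinate_hyperplane)
  also have "\<dots> = integral unit_square (\<lambda>v. 2 * pi * v$1 * H (polar v))"
    by (rule integral_cong) (auto simp: unit_square_def mem_box_cart forall_2)
  finally show ?thesis by simp
qed

lemma integral_cball_vec_of_complex: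
  fixes h :: "complex \<Rightarrow> real"
  assumes cont: "continuous_on (cball 0 1) h"
  shows "integral (cball 0 1) h = integral (vec_of_complex ` cball 0 1) (\<lambda>v. h (complex_of_vec v))"
proof -
  have "cball (0::complex) 1 \<subseteq> cbox (Complex (-1) (-1)) (Complex 1 1)"
  proof
    fix z :: complex assume "z \<in> cball 0 1"
    then show "z \<in> cbox (Complex (-1) (-1)) (Complex 1 1)"
      using abs_Re_le_cmod[of z] abs_Im_le_cmod[of z] by (auto simp: cbox_complex_eq)
  qed
  moreover have "h integrable_on cball 0 1"
    by (rule integrable_continuous_compact[OF compact_cball cont])
  ultimately have "((\<lambda>v. h (complex_of_vec v)) has_integral integral (cball 0 1) h)
      (vec_of_complex ` cball 0 1)"
    by (intro has_integral_twiddle_subset[OF complex_of_vec_inverse vec_of_complex_inverse _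
          complex_of_vec_cbox vec_of_complex_cbox content_complex_of_vec_cbox] integrable_integral)
      (simp_all add: linear_continuous_at bounded_linear_complex_of_vec)
  then show ?thesis by (simp add: integral_unique)
qed

lemma pair_of_vec_unit_square: "pair_of_vec ` unit_square = cbox (0, 0) (1, 1)"
  by (simp only: unit_square_def pair_of_vec_cbox) (simp add: pair_of_vec_def)

lemma integral_unit_square_pair:
  fixes G :: "real^2 \<Rightarrow> real"
  assumes cont: "continuous_on unit_square G"
  shows "integral unit_square G = integral (cbox (0, 0) (1, 1)) (\<lambda>p. G (vec_of_pair p))"
proof -
  have "G integrable_on unit_square"
    using cont by (simp add: unit_square_def integrable_continuous)
  then have "((\<lambda>p. G (vec_of_pair p)) has_integral integral unit_square G) (pair_of_vec ` unit_square)"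
    unfolding unit_square_def
    by (intro has_integral_twiddle_subset[OF vec_of_pair_inverse pair_of_vec_inverse _
          vec_of_pair_cbox pair_of_vec_cbox content_vec_of_pair_cbox order_refl] integrable_integral)
      (simp add: linear_continuous_at bounded_linear_vec_of_pair)
  then show ?thesis by (simp add: integral_unique pair_of_vec_unit_square)
qed

lemma integral_cball_polar:
  fixes h :: "complex \<Rightarrow> real"
  assumes cont: "continuous_on (cball 0 1) h"
  shows "integral (cball 0 1) h =
    integral {0..1} (\<lambda>r. integral {0..1} (\<lambda>t. 2 * pi * r * h (r * cis (2 * pi * t))))"
proof -
  let ?G = "\<lambda>v. 2 * pi * v$1 * h (complex_of_vec (polar v))"
  let ?K = "\<lambda>p::real \<times> real. 2 * pi * fst p * h (fst p * cis (2 * pi * snd p))"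
  have K_cont: "continuous_on (cbox (0, 0) (1, 1)) ?K"
    by (intro continuous_intros continuous_on_compose2[OF cont]) (auto simp: cbox_Pair_eq norm_mult)
  have "continuous_on unit_square (\<lambda>v. ?K (pair_of_vec v))"
    by (rule continuous_on_compose2[OF K_cont])
      (auto simp: pair_of_vec_unit_square intro: linear_continuous_on bounded_linear_pair_of_vec)
  then have G_cont: "continuous_on unit_square ?G"
    by (simp add: pair_of_vec_def complex_of_vec_polar)
  have "integral (cball 0 1) h = integral (vec_of_complex ` cball 0 1) (\<lambda>v. h (complex_of_vec v))"
    by (rule integral_cball_vec_of_complex[OF cont])
  also have "\<dots> = integral unit_square ?G"
    by (rule integral_polar_vec, rule continuous_on_compose2[OF cont])
      (auto intro: linear_continuous_on bounded_linear_complex_of_vec)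
  also have "\<dots> = integral (cbox (0, 0) (1, 1)) ?K"
    unfolding integral_unit_square_pair[OF G_cont] by (simp add: vec_of_pair_def complex_of_vec_polar)
  also have "\<dots> = integral {0..1} (\<lambda>r. integral {0..1} (\<lambda>t. ?K (r, t)))"
    using integral_prod_continuous[OF K_cont] by simp
  finally show ?thesis by simp
qed

section \<open>The area form\<close>

definition area_form :: "complex \<Rightarrow> complex \<Rightarrow> real" where
  "area_form a b = Im (cnj a * b)"

lemma area_form_swap: "area_form b a = - area_form a b"
  by (simp add: area_form_def algebra_simps)

lemma abs_area_form_le: "\<bar>area_form a b\<bar> \<le> norm a * norm b"
  unfolding area_form_def by (metis abs_Im_le_cmod complex_mod_cnj norm_mult)

lemma bounded_bilinear_area_form: "bounded_bilinear area_form"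
proof (rule bounded_bilinear.intro)
  show "\<exists>K. \<forall>a b. norm (area_form a b) \<le> norm a * norm b * K"
    using abs_area_form_le by (intro exI[of _ 1]) simp
qed (simp_all add: area_form_def algebra_simps)

lemmas continuous_on_area_form [continuous_intros] =
  bounded_bilinear.continuous_on[OF bounded_bilinear_area_form]

lemma linear_complex_eq:
  assumes "linear L"
  shows "L w = Re w *\<^sub>R L 1 + Im w *\<^sub>R L \<i>"
proof -
  have "w = Re w *\<^sub>R 1 + Im w *\<^sub>R \<i>" by (simp add: complex_eq_iff)
  then have "L w = L (Re w *\<^sub>R 1 + Im w *\<^sub>R \<i>)" by simp
  then show ?thesis using assms by (simp add: linear_add linear_scale)
qed

lemma area_form_linear:
  assumes "linear L"
  shows "area_form (L w) (L w') = jac_det L * area_form w w'"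
  by (simp add: linear_complex_eq[OF assms, of w] linear_complex_eq[OF assms, of w'] jac_det_def
      area_form_def scaleR_conv_of_real algebra_simps)

lemma integral_area_form_by_parts_periodic:
  fixes f g :: "real \<Rightarrow> complex"
  assumes f: "\<And>t. t \<in> {0..1} \<Longrightarrow> (f has_vector_derivative f' t) (at t within {0..1})"
    and g: "\<And>t. t \<in> {0..1} \<Longrightarrow> (g has_vector_derivative g' t) (at t within {0..1})"
    and f'_cont: "continuous_on {0..1} f'" and g'_cont: "continuous_on {0..1} g'"
    and periodic: "f 0 = f 1" "g 0 = g 1"
  shows "integral {0..1} (\<lambda>t. area_form (f t) (g' t)) =
    integral {0..1} (\<lambda>t. area_form (g t) (f' t))"
proof -
  have "continuous_on {0..1} f" "continuous_on {0..1} g"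
    using f g by (metis continuous_on_eq_continuous_within has_vector_derivative_continuous)+
  then have int: "((\<lambda>t. area_form (f' t) (g t)) has_integral
      integral {0..1} (\<lambda>t. area_form (f' t) (g t))) {0..1}"
    by (intro integrable_integral integrable_continuous_interval continuous_intros f'_cont)
  have "((\<lambda>t. area_form (f' t) (g t) + area_form (f t) (g' t)) has_integral
      area_form (f 1) (g 1) - area_form (f 0) (g 0)) {0..1}"
    using bounded_bilinear.has_vector_derivative[OF bounded_bilinear_area_form f g]
    by (intro fundamental_theorem_of_calculus) (auto simp: add.commute)
  then have "((\<lambda>t. area_form (f' t) (g t) + area_form (f t) (g' t)) has_integral 0) {0..1}"
    using periodic by simp
  from has_integral_diff[OF this int]
  have "((\<lambda>t. area_form (f t) (g' t)) has_integral
      - integral {0..1} (\<lambda>t. area_form (f' t) (g t))) {0..1}"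
    by simp
  moreover have "((\<lambda>t. area_form (g t) (f' t)) has_integral
      - integral {0..1} (\<lambda>t. area_form (f' t) (g t))) {0..1}"
    using has_integral_neg[OF int] by (simp add: area_form_swap[of "g _"])
  ultimately show ?thesis by (simp add: integral_unique)
qed

section \<open>Stokes' formula for C^1 maps of the disc\<close>

lemma uniformly_equicontinuous_fst:
  fixes F :: "real \<Rightarrow> real \<Rightarrow> 'a::metric_space"
  assumes "continuous_on ({a..b} \<times> {c..d}) (\<lambda>p. F (fst p) (snd p))" and "e > 0"
  obtains \<delta> where "\<delta> > 0"
    and "\<And>r r' t. r \<in> {a..b} \<Longrightarrow> r' \<in> {a..b} \<Longrightarrow> t \<in> {c..d} \<Longrightarrow> \<bar>r' - r\<bar> < \<delta> \<Longrightarrow>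
      dist (F r' t) (F r t) < e"
proof -
  have "uniformly_continuous_on ({a..b} \<times> {c..d}) (\<lambda>p. F (fst p) (snd p))"
    by (intro compact_uniformly_continuous assms(1) compact_Times compact_Icc)
  then obtain \<delta> where "\<delta> > 0" and \<delta>: "\<And>p p'. p \<in> {a..b} \<times> {c..d} \<Longrightarrow> p' \<in> {a..b} \<times> {c..d} \<Longrightarrow>
      dist p' p < \<delta> \<Longrightarrow> dist (F (fst p') (snd p')) (F (fst p) (snd p)) < e"
    unfolding uniformly_continuous_on_def using \<open>e > 0\<close> by metis
  show ?thesis
  proof (rule that[OF \<open>\<delta> > 0\<close>])
    fix r r' t assume "r \<in> {a..b}" "r' \<in> {a..b}" "t \<in> {c..d}" "\<bar>r' - r\<bar> < \<delta>"
    then show "dist (F r' t) (F r t) < e"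
      using \<delta>[of "(r, t)" "(r', t)"] by (simp add: dist_Pair_Pair dist_real_def)
  qed
qed

locale C1_disc_map =
  fixes u :: "complex \<Rightarrow> complex" and U :: "complex \<Rightarrow> complex \<Rightarrow> complex"
  assumes has_derivative_u: "\<And>z. z \<in> cball 0 1 \<Longrightarrow> (u has_derivative U z) (at z within cball 0 1)"
    and continuous_U_1: "continuous_on (cball 0 1) (\<lambda>z. U z 1)"
    and continuous_U_i: "continuous_on (cball 0 1) (\<lambda>z. U z \<i>)"
begin

lemma linear_U: "z \<in> cball 0 1 \<Longrightarrow> linear (U z)"
  using has_derivative_u has_derivative_bounded_linear bounded_linear.linear by blast

lemma continuous_on_U [continuous_intros]:
  assumes "continuous_on S f" "continuous_on S g" "f ` S \<subseteq> cball 0 1"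
  shows "continuous_on S (\<lambda>s. U (f s) (g s))"
proof (rule continuous_on_eq)
  show "continuous_on S (\<lambda>s. Re (g s) *\<^sub>R U (f s) 1 + Im (g s) *\<^sub>R U (f s) \<i>)"
    by (intro continuous_intros continuous_on_compose2[OF continuous_U_1 assms(1,3)]
        continuous_on_compose2[OF continuous_U_i assms(1,3)] assms(2))
  show "Re (g s) *\<^sub>R U (f s) 1 + Im (g s) *\<^sub>R U (f s) \<i> = U (f s) (g s)" if "s \<in> S" for s
    using linear_complex_eq[OF linear_U, symmetric] assms(3) that by blast
qed

lemma has_vector_derivative_u_comp:
  assumes "(\<gamma> has_vector_derivative \<gamma>') (at s within S)" "\<gamma> ` S \<subseteq> cball 0 1" "s \<in> S"
  shows "((\<lambda>s. u (\<gamma> s)) has_vector_derivative U (\<gamma> s) \<gamma>') (at s within S)"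
proof -
  have "((\<lambda>s. u (\<gamma> s)) has_derivative (\<lambda>h. U (\<gamma> s) (h *\<^sub>R \<gamma>'))) (at s within S)"
    using has_derivative_in_compose2[OF has_derivative_u assms(2,3)] assms(1)
    by (simp add: has_vector_derivative_def)
  moreover have "U (\<gamma> s) (h *\<^sub>R \<gamma>') = h *\<^sub>R U (\<gamma> s) \<gamma>'" for h
    using linear_U assms(2,3) by (simp add: image_subset_iff linear_scale)
  ultimately show ?thesis by (simp add: has_vector_derivative_def)
qed

definition loop :: "real \<Rightarrow> real \<Rightarrow> complex" where
  "loop r t = u (r * cis (2 * pi * t))"

definition loop_tangent :: "real \<Rightarrow> real \<Rightarrow> complex" where
  "loop_tangent r t = U (r * cis (2 * pi * t)) (\<i> * (2 * pi * r) * cis (2 * pi * t))"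

definition loop_radial :: "real \<Rightarrow> real \<Rightarrow> complex" where
  "loop_radial r t = U (r * cis (2 * pi * t)) (cis (2 * pi * t))"

definition enclosed_area :: "real \<Rightarrow> real" where
  "enclosed_area r = integral {0..1} (\<lambda>t. area_form (loop r t) (loop_tangent r t)) / 2"

definition area_rate :: "real \<Rightarrow> real" where
  "area_rate r = integral {0..1} (\<lambda>t. area_form (loop_radial r t) (loop_tangent r t))"

lemma continuous_on_loop [continuous_intros]:
  assumes "continuous_on S \<rho>" "continuous_on S \<theta>" "\<rho> ` S \<subseteq> {0..1}"
  shows "continuous_on S (\<lambda>s. loop (\<rho> s) (\<theta> s))"
proof -
  have "continuous_on (cball 0 1) u"
    using has_derivative_u continuous_on_eq_continuous_within has_derivative_continuous by blast
  then show ?thesis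
    unfolding loop_def
    by (rule continuous_on_compose2, intro continuous_intros assms)
      (use assms in \<open>auto simp: norm_mult\<close>)
qed

lemma continuous_on_loop_tangent [continuous_intros]:
  assumes "continuous_on S \<rho>" "continuous_on S \<theta>" "\<rho> ` S \<subseteq> {0..1}"
  shows "continuous_on S (\<lambda>s. loop_tangent (\<rho> s) (\<theta> s))"
  unfolding loop_tangent_def
  by (intro continuous_intros assms) (use assms in \<open>auto simp: norm_mult\<close>)

lemma continuous_on_loop_radial [continuous_intros]:
  assumes "continuous_on S \<rho>" "continuous_on S \<theta>" "\<rho> ` S \<subseteq> {0..1}"
  shows "continuous_on S (\<lambda>s. loop_radial (\<rho> s) (\<theta> s))"
  unfolding loop_radial_def
  by (intro continuous_intros assms) (use assms in \<open>auto simp: norm_mult\<close>)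

lemma continuous_on_loop_fixed_radius:
  assumes "r \<in> {0..1}"
  shows "continuous_on S (loop r)" "continuous_on S (loop_tangent r)" "continuous_on S (loop_radial r)"
  using assms
  by (auto intro!: continuous_on_loop continuous_on_loop_tangent continuous_on_loop_radial)

lemma loop_periodic: "loop r 0 = loop r 1"
  by (simp add: loop_def)

lemma loop_has_tangent:
  assumes "r \<in> {0..1}"
  shows "(loop r has_vector_derivative loop_tangent r t) (at t)"
proof -
  have "((\<lambda>t. complex_of_real r * cis (2 * pi * t)) has_vector_derivative
      \<i> * (2 * pi * r) * cis (2 * pi * t)) (at t)"
    by (auto intro!: derivative_eq_intros simp: has_vector_derivative_def scaleR_conv_of_real
        algebra_simps)
  moreover have "(\<lambda>t. complex_of_real r * cis (2 * pi * t)) ` UNIV \<subseteq> cball 0 1"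
    using assms by (auto simp: norm_mult)
  ultimately show ?thesis
    using has_vector_derivative_u_comp[of _ _ t UNIV]
    by (simp add: loop_def[abs_def] loop_tangent_def)
qed

lemma loop_has_radial:
  assumes "r \<in> {0..1}"
  shows "((\<lambda>r. loop r t) has_vector_derivative loop_radial r t) (at r within {0..1})"
proof -
  have "((\<lambda>r. complex_of_real r * cis (2 * pi * t)) has_vector_derivative cis (2 * pi * t))
      (at r within {0..1})"
    by (auto intro!: derivative_eq_intros simp: has_vector_derivative_def scaleR_conv_of_real)
  moreover have "(\<lambda>r. complex_of_real r * cis (2 * pi * t)) ` {0..1} \<subseteq> cball 0 1"
    by (auto simp: norm_mult)
  ultimately show ?thesis
    using has_vector_derivative_u_comp[of _ _ r "{0..1}"] assms
    by (simp add: loop_def loop_radial_def)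
qed

definition area_remainder :: "real \<Rightarrow> real \<Rightarrow> real \<Rightarrow> real" where
  "area_remainder r0 r t =
     area_form (loop r t - loop r0 t - (r - r0) *\<^sub>R loop_radial r0 t) (loop_tangent r0 t) +
     area_form (loop r t - loop r0 t) (loop_tangent r t - loop_tangent r0 t) / 2"

text \<open>Integrating by parts in t moves the r-increment of loop_tangent onto loop; this replaces
  the mixed second derivative of u, which need not exist.\<close>

lemma integral_area_form_loop_increment:
  assumes r: "r \<in> {0..1}" and r0: "r0 \<in> {0..1}"
  shows "integral {0..1} (\<lambda>t. area_form (loop r0 t) (loop_tangent r t - loop_tangent r0 t)) =
    integral {0..1} (\<lambda>t. area_form (loop r t - loop r0 t) (loop_tangent r0 t))"
proof (rule integral_area_form_by_parts_periodic)
  show "(loop r0 has_vector_derivative loop_tangent r0 t) (at t within {0..1})" for t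
    by (rule has_vector_derivative_at_within[OF loop_has_tangent[OF r0]])
  show "((\<lambda>t. loop r t - loop r0 t) has_vector_derivative loop_tangent r t - loop_tangent r0 t)
      (at t within {0..1})" for t
    by (rule has_vector_derivative_at_within,
        rule has_vector_derivative_diff[OF loop_has_tangent[OF r] loop_has_tangent[OF r0]])
qed (use r r0 in \<open>auto intro!: continuous_on_diff continuous_on_loop_fixed_radius
      simp: loop_periodic\<close>)

lemma enclosed_area_increment:
  assumes r: "r \<in> {0..1}" and r0: "r0 \<in> {0..1}"
  shows "enclosed_area r - enclosed_area r0 - (r - r0) * area_rate r0 =
    integral {0..1} (area_remainder r0 r)"
proof -
  define D where "D t = loop r t - loop r0 t" for t
  define Q where "Q t = loop_tangent r t - loop_tangent r0 t" for t
  have area_form_has_integral: "((\<lambda>t. area_form (f t) (g t)) has_integral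
      integral {0..1} (\<lambda>t. area_form (f t) (g t))) {0..1}"
    if "continuous_on {0..1} f" "continuous_on {0..1} g" for f g :: "real \<Rightarrow> complex"
    by (intro integrable_integral integrable_continuous_interval continuous_intros that)
  note v0 = continuous_on_loop_fixed_radius(1)[OF r0]
    and Q0 = continuous_on_loop_fixed_radius(2)[OF r0]
    and V0 = continuous_on_loop_fixed_radius(3)[OF r0]
  have D: "continuous_on {0..1} D" and Q: "continuous_on {0..1} Q"
    unfolding D_def[abs_def] Q_def[abs_def]
    by (intro continuous_on_diff continuous_on_loop_fixed_radius r r0)+
  let ?C = "integral {0..1} (\<lambda>t. area_form (D t) (loop_tangent r0 t))"
  let ?E = "integral {0..1} (\<lambda>t. area_form (D t) (Q t))"
  have by_parts: "integral {0..1} (\<lambda>t. area_form (loop r0 t) (Q t)) = ?C"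
    using integral_area_form_loop_increment[OF r r0] by (simp add: D_def Q_def)
  have "((\<lambda>t. area_form (loop r0 t) (loop_tangent r0 t) + area_form (D t) (loop_tangent r0 t)
      + area_form (loop r0 t) (Q t) + area_form (D t) (Q t)) has_integral
      2 * enclosed_area r0 + ?C + ?C + ?E) {0..1}"
    using has_integral_add[OF has_integral_add[OF has_integral_add[OF area_form_has_integral[OF v0 Q0]
          area_form_has_integral[OF D Q0]] area_form_has_integral[OF v0 Q]] area_form_has_integral[OF D Q]]
    by (simp add: enclosed_area_def by_parts)
  moreover have "area_form (loop r0 t) (loop_tangent r0 t) + area_form (D t) (loop_tangent r0 t)
      + area_form (loop r0 t) (Q t) + area_form (D t) (Q t) = area_form (loop r t) (loop_tangent r t)" for t
    by (simp add: D_def Q_def area_form_def algebra_simps)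
  ultimately have "2 * enclosed_area r = 2 * enclosed_area r0 + 2 * ?C + ?E"
    by (simp add: enclosed_area_def integral_unique)
  moreover have "((\<lambda>t. area_form (D t) (loop_tangent r0 t)
      - (r - r0) * area_form (loop_radial r0 t) (loop_tangent r0 t)
      + area_form (D t) (Q t) / 2) has_integral ?C - (r - r0) * area_rate r0 + ?E / 2) {0..1}"
    unfolding area_rate_def
    by (intro has_integral_add has_integral_diff has_integral_mult_right has_integral_divide
        area_form_has_integral D Q V0 Q0)
  moreover have "area_form (D t) (loop_tangent r0 t)
      - (r - r0) * area_form (loop_radial r0 t) (loop_tangent r0 t) + area_form (D t) (Q t) / 2 =
      area_remainder r0 r t" for t
    by (simp add: area_remainder_def D_def Q_def area_form_def scaleR_conv_of_real algebra_simps)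
  ultimately show ?thesis
    by (simp add: integral_unique)
qed

lemma loop_linearization_error:
  assumes r: "r \<in> {0..1}" and r0: "r0 \<in> {0..1}"
    and close: "\<And>s. s \<in> closed_segment r0 r \<Longrightarrow> norm (loop_radial s t - loop_radial r0 t) \<le> e"
  shows "norm (loop r t - loop r0 t - (r - r0) *\<^sub>R loop_radial r0 t) \<le> e * \<bar>r - r0\<bar>"
proof -
  have segment: "closed_segment r0 r \<subseteq> {0..1}"
    by (rule closed_segment_subset[OF r0 r]) simp
  have "norm (loop r t - loop r0 t - (r - r0) *\<^sub>R loop_radial r0 t) \<le> norm (r - r0) * e"
  proof (rule vector_differentiable_bound_linearization[where f = "\<lambda>s. loop s t"
        and f' = "\<lambda>s. loop_radial s t" and S = "closed_segment r0 r"])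
    show "((\<lambda>s. loop s t) has_vector_derivative loop_radial s t) (at s within closed_segment r0 r)"
      if "s \<in> closed_segment r0 r" for s
      using that segment by (blast intro: has_vector_derivative_within_subset loop_has_radial)
    show "norm (loop_radial s t - loop_radial r0 t) \<le> e" if "s \<in> closed_segment r0 r" for s
      using close that .
  qed simp_all
  then show ?thesis by (simp add: mult.commute)
qed

lemma abs_area_remainder_le:
  assumes r: "r \<in> {0..1}" and r0: "r0 \<in> {0..1}" and e: "e \<le> 1"
    and K: "\<And>t. t \<in> {0..1} \<Longrightarrow> norm (loop_tangent r0 t) \<le> K \<and> norm (loop_radial r0 t) \<le> K"
    and close: "\<And>s t. s \<in> closed_segment r0 r \<Longrightarrow> t \<in> {0..1} \<Longrightarrow>
      norm (loop_tangent s t - loop_tangent r0 t) \<le> e \<and> norm (loop_radial s t - loop_radial r0 t) \<le> e"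
    and t: "t \<in> {0..1}"
  shows "\<bar>area_remainder r0 r t\<bar> \<le> e * (2 * K + 1) * \<bar>r - r0\<bar>"
proof -
  let ?s = "\<bar>r - r0\<bar>"
  let ?E = "\<lambda>t. loop r t - loop r0 t - (r - r0) *\<^sub>R loop_radial r0 t"
  have "0 \<le> K" using K[OF t] norm_ge_zero[of "loop_tangent r0 t"] by linarith
  have "0 \<le> e" using close[OF ends_in_segment(1) t] by simp
  have E: "norm (?E t) \<le> e * ?s"
    by (rule loop_linearization_error[OF r r0]) (use close t in auto)
  have "norm (loop r t - loop r0 t) \<le> norm (?E t) + norm ((r - r0) *\<^sub>R loop_radial r0 t)"
    using norm_triangle_sub[of "loop r t - loop r0 t" "(r - r0) *\<^sub>R loop_radial r0 t"] by linarith
  also have "\<dots> \<le> 1 * ?s + ?s * K"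
  proof (rule add_mono)
    show "norm (?E t) \<le> 1 * ?s"
      using E e by (meson abs_ge_zero mult_right_mono order_trans)
    show "norm ((r - r0) *\<^sub>R loop_radial r0 t) \<le> ?s * K"
      using K[OF t] by (simp add: mult_left_mono)
  qed
  finally have D: "norm (loop r t - loop r0 t) \<le> (1 + K) * ?s"
    by (simp add: algebra_simps)
  have Q: "norm (loop_tangent r t - loop_tangent r0 t) \<le> e"
    using close[OF ends_in_segment(2) t] by simp
  have "\<bar>area_remainder r0 r t\<bar> \<le> norm (?E t) * norm (loop_tangent r0 t)
      + norm (loop r t - loop r0 t) * norm (loop_tangent r t - loop_tangent r0 t) / 2"
    using abs_area_form_le[of "?E t" "loop_tangent r0 t"]
      abs_area_form_le[of "loop r t - loop r0 t" "loop_tangent r t - loop_tangent r0 t"]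
    unfolding area_remainder_def by linarith
  also have "\<dots> \<le> (e * ?s) * K + ((1 + K) * ?s) * e / 2"
    using E D Q K[OF t] \<open>0 \<le> e\<close> \<open>0 \<le> K\<close>
    by (intro add_mono divide_right_mono mult_mono) auto
  also have "\<dots> = (e * ?s) * (K + (1 + K) / 2)"
    by (simp add: algebra_simps)
  also have "\<dots> \<le> (e * ?s) * (2 * K + 1)"
    using \<open>0 \<le> e\<close> \<open>0 \<le> K\<close> by (intro mult_left_mono) auto
  finally show ?thesis by (simp add: mult_ac)
qed

lemma enclosed_area_increment_le:
  assumes r: "r \<in> {0..1}" and r0: "r0 \<in> {0..1}" and e: "e \<le> 1"
    and K: "\<And>t. t \<in> {0..1} \<Longrightarrow> norm (loop_tangent r0 t) \<le> K \<and> norm (loop_radial r0 t) \<le> K"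
    and close: "\<And>s t. s \<in> closed_segment r0 r \<Longrightarrow> t \<in> {0..1} \<Longrightarrow>
      norm (loop_tangent s t - loop_tangent r0 t) \<le> e \<and> norm (loop_radial s t - loop_radial r0 t) \<le> e"
  shows "\<bar>enclosed_area r - enclosed_area r0 - (r - r0) * area_rate r0\<bar>
    \<le> e * (2 * K + 1) * \<bar>r - r0\<bar>"
proof -
  have "norm (integral {0..1} (area_remainder r0 r)) \<le> e * (2 * K + 1) * \<bar>r - r0\<bar> * (1 - 0)"
  proof (rule integral_bound)
    show "continuous_on {0..1} (area_remainder r0 r)"
      unfolding area_remainder_def[abs_def] by (intro continuous_intros) (use r r0 in auto)
    show "norm (area_remainder r0 r t) \<le> e * (2 * K + 1) * \<bar>r - r0\<bar>" if "t \<in> {0..1}" for t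
      using abs_area_remainder_le[OF r r0 e K close that] by simp
  qed simp
  then show ?thesis by (simp add: enclosed_area_increment[OF r r0])
qed

lemma continuous_on_loop_derivatives_square:
  "continuous_on ({0..1} \<times> {0..1}) (\<lambda>p. loop_tangent (fst p) (snd p))"
  "continuous_on ({0..1} \<times> {0..1}) (\<lambda>p. loop_radial (fst p) (snd p))"
  by (intro continuous_on_loop_tangent continuous_on_loop_radial continuous_on_fst continuous_on_snd
      continuous_on_id; force)+

lemma loop_derivatives_bounded:
  obtains K where "\<And>r t. r \<in> {0..1} \<Longrightarrow> t \<in> {0..1} \<Longrightarrow>
    norm (loop_tangent r t) \<le> K \<and> norm (loop_radial r t) \<le> K"
proof -
  let ?N = "\<lambda>p. norm (loop_tangent (fst p) (snd p)) + norm (loop_radial (fst p) (snd p))"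
  have "compact (?N ` ({0..1} \<times> {0..1}))"
    by (intro compact_continuous_image compact_Times compact_Icc continuous_intros
        continuous_on_loop_derivatives_square)
  then obtain K where K: "\<forall>y \<in> ?N ` ({0..1} \<times> {0..1}). norm y \<le> K"
    using compact_imp_bounded bounded_iff by blast
  show ?thesis
  proof (rule that)
    fix r t :: real assume "r \<in> {0..1}" "t \<in> {0..1}"
    then have "norm (loop_tangent r t) + norm (loop_radial r t) \<le> K" using K by fastforce
    then show "norm (loop_tangent r t) \<le> K \<and> norm (loop_radial r t) \<le> K"
      using norm_ge_zero[of "loop_tangent r t"] norm_ge_zero[of "loop_radial r t"] by linarith
  qed
qed

lemma loop_derivatives_uniformly_close:
  assumes "e > 0"
  obtains d where "d > 0"
    and "\<And>r0 r s t. r0 \<in> {0..1} \<Longrightarrow> r \<in> {0..1} \<Longrightarrow> \<bar>r - r0\<bar> < d \<Longrightarrow>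
      s \<in> closed_segment r0 r \<Longrightarrow> t \<in> {0..1} \<Longrightarrow>
      norm (loop_tangent s t - loop_tangent r0 t) \<le> e \<and> norm (loop_radial s t - loop_radial r0 t) \<le> e"
proof -
  obtain d1 where "d1 > 0" and d1: "\<And>r r' t. r \<in> {0..1} \<Longrightarrow> r' \<in> {0..1} \<Longrightarrow> t \<in> {0..1} \<Longrightarrow>
      \<bar>r' - r\<bar> < d1 \<Longrightarrow> dist (loop_tangent r' t) (loop_tangent r t) < e"
    using uniformly_equicontinuous_fst[OF continuous_on_loop_derivatives_square(1) assms] by blast
  obtain d2 where "d2 > 0" and d2: "\<And>r r' t. r \<in> {0..1} \<Longrightarrow> r' \<in> {0..1} \<Longrightarrow> t \<in> {0..1} \<Longrightarrow>
      \<bar>r' - r\<bar> < d2 \<Longrightarrow> dist (loop_radial r' t) (loop_radial r t) < e"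
    using uniformly_equicontinuous_fst[OF continuous_on_loop_derivatives_square(2) assms] by blast
  show ?thesis
  proof (rule that[of "min d1 d2"])
    show "min d1 d2 > 0" using \<open>d1 > 0\<close> \<open>d2 > 0\<close> by simp
    fix r0 r s t :: real
    assume r0: "r0 \<in> {0..1}" and r: "r \<in> {0..1}" and near: "\<bar>r - r0\<bar> < min d1 d2"
      and s: "s \<in> closed_segment r0 r" and t: "t \<in> {0..1}"
    have "\<bar>s - r0\<bar> < d1" "\<bar>s - r0\<bar> < d2"
      using s near by (auto simp: closed_segment_eq_real_ivl split: if_splits)
    moreover have "s \<in> {0..1}" using closed_segment_subset[OF r0 r] s by auto
    ultimately show "norm (loop_tangent s t - loop_tangent r0 t) \<le> e \<and>
        norm (loop_radial s t - loop_radial r0 t) \<le> e"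
      using d1[OF r0 _ t, of s] d2[OF r0 _ t, of s] by (simp add: dist_norm)
  qed
qed

lemma enclosed_area_has_derivative:
  assumes r0: "r0 \<in> {0..1}"
  shows "(enclosed_area has_real_derivative area_rate r0) (at r0 within {0..1})"
  unfolding has_field_derivative_def has_derivative_within_alt
proof (intro conjI allI impI)
  show "bounded_linear ((*) (area_rate r0))" by (rule bounded_linear_mult_right)
  fix \<epsilon> :: real assume "\<epsilon> > 0"
  obtain K where K: "\<And>r t. r \<in> {0..1} \<Longrightarrow> t \<in> {0..1} \<Longrightarrow>
      norm (loop_tangent r t) \<le> K \<and> norm (loop_radial r t) \<le> K"
    using loop_derivatives_bounded by blast
  have "0 \<le> K" using K[OF r0 r0] norm_ge_zero[of "loop_tangent r0 r0"] by linarith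
  define e where "e = min 1 (\<epsilon> / (2 * K + 1))"
  have "0 < e" "e \<le> 1" "e \<le> \<epsilon> / (2 * K + 1)"
    using \<open>\<epsilon> > 0\<close> \<open>0 \<le> K\<close> by (simp_all add: e_def)
  then have e\<epsilon>: "e * (2 * K + 1) \<le> \<epsilon>"
    using \<open>0 \<le> K\<close> by (simp add: pos_le_divide_eq)
  obtain d where "d > 0" and close: "\<And>r0 r s t. r0 \<in> {0..1} \<Longrightarrow> r \<in> {0..1} \<Longrightarrow> \<bar>r - r0\<bar> < d \<Longrightarrow>
      s \<in> closed_segment r0 r \<Longrightarrow> t \<in> {0..1} \<Longrightarrow>
      norm (loop_tangent s t - loop_tangent r0 t) \<le> e \<and> norm (loop_radial s t - loop_radial r0 t) \<le> e"
    using loop_derivatives_uniformly_close[OF \<open>0 < e\<close>] by blast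
  show "\<exists>d>0. \<forall>r\<in>{0..1}. norm (r - r0) < d \<longrightarrow>
      norm (enclosed_area r - enclosed_area r0 - area_rate r0 * (r - r0)) \<le> \<epsilon> * norm (r - r0)"
  proof (intro exI[of _ d] conjI ballI impI)
    fix r assume r: "r \<in> {0..1}" and "norm (r - r0) < d"
    then have "\<bar>enclosed_area r - enclosed_area r0 - (r - r0) * area_rate r0\<bar>
        \<le> e * (2 * K + 1) * \<bar>r - r0\<bar>"
      using close[OF r0 r] by (intro enclosed_area_increment_le[OF r r0 \<open>e \<le> 1\<close> K[OF r0]]) auto
    also have "\<dots> \<le> \<epsilon> * \<bar>r - r0\<bar>" using e\<epsilon> by (intro mult_right_mono) auto
    finally show "norm (enclosed_area r - enclosed_area r0 - area_rate r0 * (r - r0))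
        \<le> \<epsilon> * norm (r - r0)"
      by (simp add: mult.commute)
  qed (rule \<open>d > 0\<close>)
qed

lemma enclosed_area_0: "enclosed_area 0 = 0"
proof -
  have "loop_tangent 0 t = 0" for t
    using linear_0[OF linear_U[of 0]] by (simp add: loop_tangent_def)
  then show ?thesis by (simp add: enclosed_area_def area_form_def)
qed

lemma area_rate_eq:
  assumes "r \<in> {0..1}"
  shows "area_rate r = integral {0..1} (\<lambda>t. 2 * pi * r * jac_det (U (r * cis (2 * pi * t))))"
proof -
  have "area_form (cis a) (\<i> * c * cis a) = Re c * (cos a * cos a + sin a * sin a)" for a c
    by (simp add: area_form_def algebra_simps)
  then have cis_rotation: "area_form (cis a) (\<i> * c * cis a) = Re c" for a c
    by simp
  have "area_form (loop_radial r t) (loop_tangent r t) =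
      2 * pi * r * jac_det (U (r * cis (2 * pi * t)))" for t
  proof -
    have "linear (U (r * cis (2 * pi * t)))"
      using assms by (intro linear_U) (simp add: norm_mult)
    then show ?thesis
      by (simp add: loop_radial_def loop_tangent_def area_form_linear cis_rotation)
  qed
  then show ?thesis by (simp add: area_rate_def)
qed

lemma integral_jac_det_eq_enclosed_area: "integral (cball 0 1) (\<lambda>z. jac_det (U z)) = enclosed_area 1"
proof -
  have "continuous_on (cball 0 1) (\<lambda>z. jac_det (U z))"
    unfolding jac_det_def by (intro continuous_intros continuous_U_1 continuous_U_i)
  then have "integral (cball 0 1) (\<lambda>z. jac_det (U z)) =
      integral {0..1} (\<lambda>r. integral {0..1} (\<lambda>t. 2 * pi * r * jac_det (U (r * cis (2 * pi * t)))))"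
    by (rule integral_cball_polar)
  also have "\<dots> = integral {0..1} area_rate"
    by (rule integral_cong, rule area_rate_eq[symmetric])
  also have "\<dots> = enclosed_area 1 - enclosed_area 0"
    by (intro integral_unique fundamental_theorem_of_calculus)
      (auto simp: has_real_derivative_iff_has_vector_derivative[symmetric] enclosed_area_has_derivative)
  finally show ?thesis by (simp add: enclosed_area_0)
qed

lemma pullback_omega_integral_eq_boundary_integral:
  assumes x: "\<forall>t\<in>{0..1}. (x has_vector_derivative x' t) (at t within {0..1})"
    and cap: "\<forall>t\<in>{0..1}. u (cis (2 * pi * t)) = x t"
  shows "pullback_omega_integral U = integral {0..1} (\<lambda>t. area_form (x t) (x' t)) / 2"
proof -
  have loop_1: "loop 1 t = x t" if "t \<in> {0..1}" for t
    using cap that by (simp add: loop_def)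
  have "loop_tangent 1 t = x' t" if t: "t \<in> {0..1}" for t
  proof -
    have "(x has_vector_derivative loop_tangent 1 t) (at t within {0..1})"
      by (rule has_vector_derivative_transform[OF t _ has_vector_derivative_at_within[OF loop_has_tangent]])
        (auto simp: loop_1)
    then show ?thesis
      using vector_derivative_unique_within_closed_interval[of 0 1 t x] x t by auto
  qed
  with loop_1 have "integral {0..1} (\<lambda>t. area_form (loop 1 t) (loop_tangent 1 t)) =
      integral {0..1} (\<lambda>t. area_form (x t) (x' t))"
    by (intro integral_cong) simp
  then have "enclosed_area 1 = integral {0..1} (\<lambda>t. area_form (x t) (x' t)) / 2"
    by (simp add: enclosed_area_def)
  then show ?thesis
    by (simp add: pullback_omega_integral_def integral_jac_det_eq_enclosed_area)
qed

end

section \<open>Area and winding number of a curve in the annulus\<close>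

lemma valid_path_of_C1:
  fixes x :: "real \<Rightarrow> 'a::real_normed_vector"
  assumes x: "\<forall>t\<in>{0..1}. (x has_vector_derivative x' t) (at t within {0..1})"
    and x'_cont: "continuous_on {0..1} x'"
  shows "valid_path x"
proof -
  have x_at: "(x has_vector_derivative x' t) (at t)" if "t \<in> {0<..<1}" for t
    using x[rule_format, of t] that at_within_interior[of t "{0..1}"] by simp
  have "x C1_differentiable_on {0<..<1}"
    unfolding C1_differentiable_on_eq
  proof
    show "\<forall>t\<in>{0<..<1}. x differentiable at t"
      using x_at differentiableI_vector by blast
    have "continuous_on {0<..<1} x'" using x'_cont by (rule continuous_on_subset) auto
    then show "continuous_on {0<..<1} (\<lambda>t. vector_derivative x (at t))"
      by (rule continuous_on_eq) (use x_at vector_derivative_at in metis)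
  qed
  moreover have "{0..1::real} - {0, 1} = {0<..<1}" by auto
  moreover have "continuous_on {0..1} x"
    using x by (metis continuous_on_eq_continuous_within has_vector_derivative_continuous)
  ultimately show ?thesis
    unfolding valid_path_def piecewise_C1_differentiable_on_def by (intro conjI exI[of _ "{0, 1}"]) auto
qed

lemma Re_winding_number_C1:
  assumes x: "\<forall>t\<in>{0..1}. (x has_vector_derivative x' t) (at t within {0..1})"
    and x'_cont: "continuous_on {0..1} x'"
    and nonzero: "\<forall>t\<in>{0..1}. x t \<noteq> 0"
  shows "Re (winding_number x 0) =
    integral {0..1} (\<lambda>t. area_form (x t) (x' t) / (norm (x t))\<^sup>2) / (2 * pi)"
proof -
  have x_cont: "continuous_on {0..1} x"
    using x by (metis continuous_on_eq_continuous_within has_vector_derivative_continuous)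
  have "(\<lambda>t. x' t / x t) integrable_on {0..1}"
    using nonzero by (intro integrable_continuous_interval continuous_intros x_cont x'_cont) auto
  then have Im_integral: "integral {0..1} (\<lambda>t. Im (x' t / x t)) = Im (integral {0..1} (\<lambda>t. x' t / x t))"
    using integral_linear[OF _ bounded_linear_Im] by (simp only: o_def)
  have "0 \<notin> path_image x" using nonzero by (auto simp: path_image_def)
  then have "winding_number x 0 = integral {0..1} (\<lambda>t. 1 / x t * vector_derivative x (at t)) / (2 * pi * \<i>)"
    using winding_number_valid_path[OF valid_path_of_C1[OF x x'_cont]]
    by (simp add: contour_integral_integral)
  also have "integral {0..1} (\<lambda>t. 1 / x t * vector_derivative x (at t)) = integral {0..1} (\<lambda>t. x' t / x t)"
  proof (rule integral_spike[of "{0, 1}"])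
    fix t :: real assume "t \<in> {0..1} - {0, 1}"
    then have "(x has_vector_derivative x' t) (at t)"
      using x[rule_format, of t] at_within_interior[of t "{0..1}"] by simp
    then show "x' t / x t = 1 / x t * vector_derivative x (at t)"
      by (simp add: vector_derivative_at)
  qed auto
  finally have "Re (winding_number x 0) = Im (integral {0..1} (\<lambda>t. x' t / x t)) / (2 * pi)"
    by (simp add: Re_divide power2_eq_square)
  also note Im_integral[symmetric]
  also have "(\<lambda>t. Im (x' t / x t)) = (\<lambda>t. area_form (x t) (x' t) / (norm (x t))\<^sup>2)"
    by (simp add: area_form_def Im_divide cmod_power2 algebra_simps)
  finally show ?thesis .
qed

text \<open>For 1 \<le> \<rho> \<le> 1 + d we have (\<rho> - 1/\<rho>) / 2 \<le> d.\<close>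

lemma annulus_defect_le:
  fixes \<rho> d a L :: real
  assumes "1 \<le> \<rho>" "\<rho> \<le> 1 + d" "\<bar>a\<bar> \<le> \<rho> * L" "0 \<le> L"
  shows "\<bar>a * (1 - 1 / \<rho>\<^sup>2) / 2\<bar> \<le> L * d"
proof -
  have "\<rho> > 0" "0 \<le> 1 - 1 / \<rho>\<^sup>2" using assms by (simp_all add: field_simps)
  then have "\<bar>a * (1 - 1 / \<rho>\<^sup>2) / 2\<bar> = \<bar>a\<bar> * (1 - 1 / \<rho>\<^sup>2) / 2" by (simp add: abs_mult)
  also have "\<dots> \<le> \<rho> * L * (1 - 1 / \<rho>\<^sup>2) / 2"
    using assms \<open>0 \<le> 1 - 1 / \<rho>\<^sup>2\<close> by (intro divide_right_mono mult_right_mono) auto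
  also have "\<dots> = L * ((\<rho> - 1) * (\<rho> + 1) / \<rho>) / 2"
    using \<open>\<rho> > 0\<close> by (simp add: field_simps power2_eq_square)
  also have "\<dots> \<le> L * (d * 2) / 2"
  proof -
    have "(\<rho> - 1) * (\<rho> + 1) \<le> d * (2 * \<rho>)"
      by (rule mult_mono) (use assms in auto)
    then have "(\<rho> - 1) * (\<rho> + 1) / \<rho> \<le> d * 2"
      using \<open>\<rho> > 0\<close> by (simp add: pos_divide_le_eq mult_ac)
    then show ?thesis using assms by (intro divide_right_mono mult_left_mono) auto
  qed
  finally show ?thesis by simp
qed

lemma enclosed_area_minus_winding_number_le:
  assumes x: "\<forall>t\<in>{0..1}. (x has_vector_derivative x' t) (at t within {0..1})"
    and x'_cont: "continuous_on {0..1} x'"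
    and annulus: "\<forall>t\<in>{0..1}. 1 \<le> norm (x t) \<and> norm (x t) \<le> 1 + \<delta>"
  shows "\<bar>integral {0..1} (\<lambda>t. area_form (x t) (x' t)) / 2 - pi * Re (winding_number x 0)\<bar>
    \<le> integral {0..1} (\<lambda>t. norm (x' t)) * \<delta>"
proof -
  have x_cont: "continuous_on {0..1} x"
    using x by (metis continuous_on_eq_continuous_within has_vector_derivative_continuous)
  have nonzero: "\<forall>t\<in>{0..1}. x t \<noteq> 0" using annulus by force
  let ?a = "\<lambda>t. area_form (x t) (x' t)"
  let ?f = "\<lambda>t. ?a t * (1 - 1 / (norm (x t))\<^sup>2) / 2"
  have "((\<lambda>t. ?a t / 2 - ?a t / (norm (x t))\<^sup>2 / 2) has_integral
      integral {0..1} ?a / 2 - integral {0..1} (\<lambda>t. ?a t / (norm (x t))\<^sup>2) / 2) {0..1}"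
    using nonzero
    by (intro has_integral_diff has_integral_divide integrable_integral integrable_continuous_interval
        continuous_intros x_cont x'_cont) auto
  then have eq: "integral {0..1} ?a / 2 - pi * Re (winding_number x 0) = integral {0..1} ?f"
    by (simp add: Re_winding_number_C1[OF x x'_cont nonzero] integral_unique right_diff_distrib
        diff_divide_distrib)
  have "norm (integral {0..1} ?f) \<le> integral {0..1} (\<lambda>t. norm (x' t) * \<delta>)"
  proof (rule integral_norm_bound_integral)
    show "?f integrable_on {0..1}"
      using nonzero by (intro integrable_continuous_interval continuous_intros x_cont x'_cont) auto
    show "(\<lambda>t. norm (x' t) * \<delta>) integrable_on {0..1}"
      by (intro integrable_continuous_interval continuous_intros x'_cont)
    show "norm (?f t) \<le> norm (x' t) * \<delta>" if "t \<in> {0..1}" for t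
      using annulus that abs_area_form_le[of "x t" "x' t"]
      by (simp only: real_norm_def, intro annulus_defect_le) auto
  qed
  then show ?thesis by (simp add: eq)
qed

theorem lemma4p1:
  fixes \<delta> :: real
    and x :: "real \<Rightarrow> complex" and x' :: "real \<Rightarrow> complex"
    and u :: "complex \<Rightarrow> complex" and U :: "complex \<Rightarrow> complex \<Rightarrow> complex"
  assumes "\<delta> > 0"
    and x_C1: "\<forall>t\<in>{0..1}. (x has_vector_derivative x' t) (at t within {0..1})"
    and x'_cont: "continuous_on {0..1} x'"
    and x_closed: "x 0 = x 1"
    and x_annulus: "\<forall>t\<in>{0..1}. 1 \<le> norm (x t) \<and> norm (x t) \<le> 1 + \<delta>"
    and u_C1: "\<forall>z\<in>cball 0 1. (u has_derivative U z) (at z within cball 0 1)"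
    and U_cont: "continuous_on (cball 0 1) (\<lambda>z. U z 1)" "continuous_on (cball 0 1) (\<lambda>z. U z \<i>)"
    and u_cap: "\<forall>t\<in>{0..1}. u (cis (2 * pi * t)) = x t"
  shows "\<bar>pullback_omega_integral U - pi * Re (winding_number x 0)\<bar>
           \<le> integral {0..1} (\<lambda>t. norm (x' t)) * \<delta>"
proof -
  interpret C1_disc_map u U
    using u_C1 U_cont by unfold_locales auto
  show ?thesis
    using pullback_omega_integral_eq_boundary_integral[OF x_C1 u_cap]
      enclosed_area_minus_winding_number_le[OF x_C1 x'_cont x_annulus]
    by simp
qed

end
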